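(* Let $G$ be a finite non-identity permutation group acting on a finite set $V$, let $\delta$ be the minimum degree of $G$, and suppose the distinguishing number of $G$ is at least $3$. Then $|G| \ge 1 + 2^{\delta/2}$.
   Context: For a permutation group $G$ acting on a set $V$, a partition $\pi$ of $V$ is distinguishing if the only element of $G$ fixing each cell of $\pi$ (setwise) is the identity. The distinguishing number of $G$ is the minimum number of cells in a distinguishing partition. The minimum degree of $G$ is the minimum, over non-identity elements $g\in G$, of the number of points of $V$ moved by $g$. *)

theory Defs
  imports Complex_Main "HOL-Library.Disjoint_Sets" "HOL-Combinatorics.Permutations"
begin

definition perm_group :: "('a \<Rightarrow> 'a) set \<Rightarrow> 'a set \<Rightarrow> bool" where
  "perm_group G V \<longleftrightarrow> (\<forall>g\<in>G. g permutes V) \<and> id \<in> G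
     \<and> (\<forall>g\<in>G. \<forall>h\<in>G. g \<circ> h \<in> G) \<and> (\<forall>g\<in>G. inv g \<in> G)"

definition distinguishing :: "('a \<Rightarrow> 'a) set \<Rightarrow> 'a set set \<Rightarrow> bool" where
  "distinguishing G P \<longleftrightarrow> (\<forall>g\<in>G. (\<forall>C\<in>P. g ` C = C) \<longrightarrow> g = id)"

definition distinguishing_number :: "('a \<Rightarrow> 'a) set \<Rightarrow> 'a set \<Rightarrow> nat" where
  "distinguishing_number G V =
     (LEAST k. \<exists>P. partition_on V P \<and> distinguishing G P \<and> card P = k)"

definition moved_points :: "('a \<Rightarrow> 'a) \<Rightarrow> 'a set \<Rightarrow> 'a set" where
  "moved_points g V = {v\<in>V. g v \<noteq> v}"

definition minimum_degree :: "('a \<Rightarrow> 'a) set \<Rightarrow> 'a set \<Rightarrow> nat" where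
  "minimum_degree G V = Min {card (moved_points g V) | g. g \<in> G \<and> g \<noteq> id}"

end

theory Submission
  imports Defs "HOL-Combinatorics.Cycles"
begin

(* Let n = |V| and d the minimum degree.  A partition of V into at most
   two cells {S, V - S} is never distinguishing, so every subset S of V is fixed setwise
   by some non-identity g in G: the sets invariant under the non-identity elements cover
   the whole power set of V.  On the other hand a permutation g moving m points has at
   most 2^(n - m/2) invariant subsets: choose a maximal set A of moved points with
   A and g`A disjoint; then every moved point has an iterate in A, so an invariant set
   is determined by its trace on (V - moved points) \<union> A, a set of size at most n - m/2.
   Hence 2^n \<le> (|G| - 1) 2^(n - d/2), i.e. |G| \<ge> 1 + 2^(d/2). *)

lemma funpow_mem_invariant_iff:
  assumes "inj g" and "g ` T = T"
  shows "(g ^^ k) x \<in> T \<longleftrightarrow> x \<in> T"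
proof (induction k arbitrary: x)
  case 0
  then show ?case by simp
next
  case (Suc k)
  have "g y \<in> T \<longleftrightarrow> y \<in> T" for y
    using assms inj_image_mem_iff[OF assms(1), of y T] by simp
  then show ?case using Suc by (simp add: funpow_Suc_right del: funpow.simps)
qed

lemma moved_points_image:
  assumes "g permutes V"
  shows "g ` moved_points g V \<subseteq> moved_points g V"
proof
  fix y assume "y \<in> g ` moved_points g V"
  then obtain x where x: "x \<in> V" "g x \<noteq> x" and y: "y = g x"
    unfolding moved_points_def by blast
  have "g (g x) \<noteq> g x" using x permutes_inj[OF assms] by (auto dest: injD)
  then show "y \<in> moved_points g V"
    using x y permutes_in_image[OF assms] unfolding moved_points_def by auto
qed

lemma insert_keeps_disjoint_image:
  assumes "finite V" and "g permutes V"
    and "x \<in> moved_points g V" and "A \<inter> g ` A = {}"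
    and never: "\<And>k. (g ^^ k) x \<notin> A"
  shows "insert x A \<inter> g ` insert x A = {}"
proof -
  obtain p where p: "g ^^ p = id" "p > 0"
    using permutation_is_nilpotent permutes_imp_permutation[OF assms(1,2)] by blast
  have "x \<notin> g ` A"
  proof
    assume "x \<in> g ` A"
    then obtain a where a: "a \<in> A" "x = g a" by blast
    have "(g ^^ (p - 1)) x = (g ^^ Suc (p - 1)) a"
      using a by (simp add: funpow_Suc_right del: funpow.simps)
    also have "\<dots> = a" using p by simp
    finally show False using never[of "p - 1"] a by simp
  qed
  moreover have "g x \<notin> A" using never[of 1] by simp
  moreover have "x \<noteq> g x" using assms(3) unfolding moved_points_def by auto
  ultimately show ?thesis using assms(4) by auto
qed

(* Every permutation of a finite set admits a set A of moved points, disjoint from its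
   image, which meets the orbit of every moved point: take such a set of maximal size. *)
lemma disjoint_orbit_transversal:
  assumes fin: "finite V" and perm: "g permutes V"
  obtains A where "A \<subseteq> moved_points g V" and "A \<inter> g ` A = {}"
    and "\<And>x. x \<in> moved_points g V \<Longrightarrow> \<exists>k. (g ^^ k) x \<in> A"
proof -
  define M where "M = moved_points g V"
  have finM: "finite M" using fin unfolding M_def moved_points_def by simp
  define F where "F = {A. A \<subseteq> M \<and> A \<inter> g ` A = {}}"
  have finF: "finite F" unfolding F_def using finM by simp
  have "{} \<in> F" unfolding F_def by simp
  then obtain A where AF: "A \<in> F" and Amax: "card A = Max (card ` F)"
    using Max_in[of "card ` F"] finF by fastforce
  have AM: "A \<subseteq> M" and Adisj: "A \<inter> g ` A = {}" using AF unfolding F_def by auto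
  have "\<exists>k. (g ^^ k) x \<in> A" if xM: "x \<in> M" for x
  proof (rule ccontr)
    assume never: "\<nexists>k. (g ^^ k) x \<in> A"
    then have "insert x A \<in> F"
      using insert_keeps_disjoint_image[OF fin perm, of x A] xM AM Adisj
      unfolding F_def M_def by auto
    then have "card (insert x A) \<le> card A" using finF Amax by simp
    moreover have "x \<notin> A" using never funpow_0 by metis
    ultimately show False using finite_subset[OF AM finM] by simp
  qed
  then show ?thesis using that AM Adisj unfolding M_def by blast
qed

(* An invariant set of g is determined by its trace on any set B that meets every orbit. *)
lemma card_invariant_subsets_le:
  assumes "finite B" and "inj g"
    and hits: "\<And>x. x \<in> V \<Longrightarrow> \<exists>k. (g ^^ k) x \<in> B"
  shows "card {T. T \<subseteq> V \<and> g ` T = T} \<le> 2 ^ card B"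
proof -
  define Inv where "Inv = {T. T \<subseteq> V \<and> g ` T = T}"
  have "inj_on (\<lambda>T. T \<inter> B) Inv"
  proof (rule inj_onI)
    fix T1 T2 assume T1: "T1 \<in> Inv" and T2: "T2 \<in> Inv" and eq: "T1 \<inter> B = T2 \<inter> B"
    show "T1 = T2"
    proof (rule set_eqI)
      fix x
      show "x \<in> T1 \<longleftrightarrow> x \<in> T2"
      proof (cases "x \<in> V")
        case True
        then obtain k where k: "(g ^^ k) x \<in> B" using hits by blast
        have "x \<in> T1 \<longleftrightarrow> (g ^^ k) x \<in> T1"
          using funpow_mem_invariant_iff[OF assms(2)] T1 unfolding Inv_def by auto
        also have "\<dots> \<longleftrightarrow> (g ^^ k) x \<in> T2" using eq k by blast
        also have "\<dots> \<longleftrightarrow> x \<in> T2"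
          using funpow_mem_invariant_iff[OF assms(2)] T2 unfolding Inv_def by auto
        finally show ?thesis .
      next
        case False
        then show ?thesis using T1 T2 unfolding Inv_def by auto
      qed
    qed
  qed
  then have "card Inv \<le> card (Pow B)"
    using assms(1) by (intro card_inj_on_le) auto
  then show ?thesis using card_Pow[OF assms(1)] unfolding Inv_def by simp
qed

lemma card_invariant_subsets:
  assumes fin: "finite V" and perm: "g permutes V"
  shows "real (card {T. T \<subseteq> V \<and> g ` T = T})
           \<le> 2 powr (real (card V) - real (card (moved_points g V)) / 2)"
proof -
  define M where "M = moved_points g V"
  have MV: "M \<subseteq> V" unfolding M_def moved_points_def by auto
  have finM: "finite M" using MV fin finite_subset by blast
  have injg: "inj g" using permutes_inj[OF perm] .
  obtain A where AM: "A \<subseteq> M" and Adisj: "A \<inter> g ` A = {}"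
    and hit: "\<And>x. x \<in> M \<Longrightarrow> \<exists>k. (g ^^ k) x \<in> A"
    using disjoint_orbit_transversal[OF fin perm] unfolding M_def by blast
  have finA: "finite A" using finite_subset[OF AM finM] .
  define B where "B = (V - M) \<union> A"
  have "\<exists>k. (g ^^ k) x \<in> B" if "x \<in> V" for x
  proof (cases "x \<in> M")
    case False
    then have "(g ^^ 0) x \<in> B" using that unfolding B_def by simp
    then show ?thesis by blast
  qed (use hit B_def in blast)
  then have inv_le: "card {T. T \<subseteq> V \<and> g ` T = T} \<le> 2 ^ card B"
    using fin finA unfolding B_def by (intro card_invariant_subsets_le[OF _ injg]) auto
  have "2 * card A = card (A \<union> g ` A)"
    using Adisj finA card_image[OF inj_on_subset[OF injg]] by (simp add: card_Un_disjoint)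
  also have "\<dots> \<le> card M"
    using AM moved_points_image[OF perm] finM unfolding M_def by (intro card_mono) auto
  finally have A_half: "2 * card A \<le> card M" .
  have "card B = card (V - M) + card A"
    unfolding B_def using AM fin finA by (subst card_Un_disjoint) auto
  also have "card (V - M) = card V - card M" using MV finM by (simp add: card_Diff_subset)
  finally have "real (card B) \<le> real (card V) - real (card M) / 2"
    using A_half card_mono[OF fin MV] by simp
  then have "2 powr real (card B) \<le> 2 powr (real (card V) - real (card M) / 2)"
    by (intro powr_mono) auto
  moreover have "real (card {T. T \<subseteq> V \<and> g ` T = T}) \<le> 2 powr real (card B)"
    using inv_le by (simp add: powr_realpow)
  ultimately show ?thesis unfolding M_def by linarith
qed

lemma covering_bound:
  assumes fin: "finite V" and finH: "finite H"
    and perm: "\<And>g. g \<in> H \<Longrightarrow> g permutes V"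
    and degree: "\<And>g. g \<in> H \<Longrightarrow> d \<le> card (moved_points g V)"
    and cover: "\<And>S. S \<subseteq> V \<Longrightarrow> \<exists>g\<in>H. g ` S = S"
  shows "2 powr (real d / 2) \<le> real (card H)"
proof -
  define n where "n = card V"
  define I where "I = (\<lambda>g. {T. T \<subseteq> V \<and> g ` T = T})"
  have finI: "finite (I g)" for g
    by (rule finite_subset[of _ "Pow V"]) (auto simp: I_def fin)
  have "Pow V \<subseteq> (\<Union>g\<in>H. I g)"
  proof
    fix S assume S: "S \<in> Pow V"
    then obtain g where "g \<in> H" "g ` S = S" using cover by blast
    then show "S \<in> (\<Union>g\<in>H. I g)" using S unfolding I_def by blast
  qed
  then have "card (Pow V) \<le> card (\<Union>g\<in>H. I g)"
    using finH finI by (intro card_mono) auto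
  also have "\<dots> \<le> (\<Sum>g\<in>H. card (I g))" by (rule card_UN_le[OF finH])
  finally have "2 ^ n \<le> (\<Sum>g\<in>H. card (I g))"
    using card_Pow[OF fin] unfolding n_def by simp
  then have "2 powr real n \<le> (\<Sum>g\<in>H. real (card (I g)))"
    by (simp add: powr_realpow flip: of_nat_sum)
  also have "\<dots> \<le> (\<Sum>g\<in>H. 2 powr (real n - real d / 2))"
  proof (rule sum_mono)
    fix g assume g: "g \<in> H"
    have "real (card (I g)) \<le> 2 powr (real n - real (card (moved_points g V)) / 2)"
      using card_invariant_subsets[OF fin perm[OF g]] unfolding I_def n_def .
    also have "\<dots> \<le> 2 powr (real n - real d / 2)"
      using degree[OF g] by (intro powr_mono) auto
    finally show "real (card (I g)) \<le> 2 powr (real n - real d / 2)" .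
  qed
  also have "\<dots> = real (card H) * 2 powr (real n - real d / 2)" by simp
  also have "\<dots> = real (card H) * 2 powr real n / 2 powr (real d / 2)"
    by (simp add: powr_diff)
  finally have "2 powr (real d / 2) * 2 powr real n \<le> real (card H) * 2 powr real n"
    by (simp add: le_divide_eq mult.commute)
  then show ?thesis by simp
qed

(* With distinguishing number at least 3, no partition {S, V - S} is distinguishing, so
   every subset of V is fixed setwise by a non-identity element. *)
lemma subset_fixed_by_nonidentity:
  assumes "distinguishing_number G V \<ge> 3" and SV: "S \<subseteq> V"
  shows "\<exists>g\<in>G - {id}. g ` S = S"
proof -
  define P where "P = {S, V - S} - {{}}"
  have part: "partition_on V P"
    unfolding partition_on_def P_def disjoint_def using SV by auto
  have "card P \<le> card {S, V - S}" unfolding P_def by (rule card_mono) auto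
  also have "\<dots> \<le> 2" by (simp add: card_insert_if)
  finally have "card P \<le> 2" .
  then have "\<not> distinguishing G P"
    using assms(1) Least_le[of "\<lambda>k. \<exists>P. partition_on V P \<and> distinguishing G P \<and> card P = k"]
      part unfolding distinguishing_number_def by fastforce
  then obtain g where g: "g \<in> G" "g \<noteq> id" and fixes_cells: "\<forall>C\<in>P. g ` C = C"
    unfolding distinguishing_def by blast
  have "g ` S = S"
  proof (cases "S = {}")
    case False
    then show ?thesis using fixes_cells unfolding P_def by auto
  qed simp
  then show ?thesis using g by blast
qed

theorem lemma1:
  fixes G :: "('a \<Rightarrow> 'a) set" and V :: "'a set"
  assumes "finite V"
    and "perm_group G V"
    and "G \<noteq> {id}"
    and "distinguishing_number G V \<ge> 3"
  shows "real (card G) \<ge> 1 + 2 powr (real (minimum_degree G V) / 2)"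
proof -
  have perm: "\<And>g. g \<in> G \<Longrightarrow> g permutes V" and idG: "id \<in> G"
    using assms(2) unfolding perm_group_def by auto
  have finG: "finite G"
    using finite_subset[OF _ finite_permutations[OF assms(1)]] perm by blast
  have "2 powr (real (minimum_degree G V) / 2) \<le> real (card (G - {id}))"
  proof (rule covering_bound[OF assms(1)])
    fix g assume "g \<in> G - {id}"
    then show "minimum_degree G V \<le> card (moved_points g V)"
      unfolding minimum_degree_def using finG by (intro Min_le) auto
  qed (use finG perm subset_fixed_by_nonidentity[OF assms(4)] in auto)
  moreover have "card (G - {id}) = card G - 1" and "card G \<ge> 1"
    using finG idG by (auto simp: card_Diff_singleton Suc_le_eq card_gt_0_iff)
  ultimately show ?thesis by (simp add: of_nat_diff)
qed

end
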